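(* Let $1\le i\le b$, let $n$ be a positive integer and $m,k$ non-negative integers. Then (1) $d_i(n+p-1)\ge q\,d_i(n)$; (2) $y_i(m+p-1,k)\ge q\,y_i(m,k)$; (3) $y_i(m+p-1)>q\,y_i(m)$.
   Context: Let $q=p^b$ with $p$ prime, $b\ge1$. Let $y\in\mathbb{Z}_p$ be written $y=\sum_{i=1}^b p^{i-1}y_i$ with $y_i=\sum_{j\ge0}y_{i,j}q^j$, $0\le y_{i,j}<p$. Assume $y$ is $q$-full: no $y_i$ is a non-negative integer (so $\sum_j y_{i,j}=\infty$). For $n\ge1$, $d_i(n)=p^{i-1}q^w$ where $w\ge0$ is the unique integer with $\sum_{j=0}^{w-1}y_{i,j}<n\le\sum_{j=0}^{w}y_{i,j}$. For $m\in\mathbb{Z}$, $y_i(m)=\sum_{n=1}^m d_i(n)$ (zero if $m\le0$), and $y_i(m,k)=y_i(m+k)-y_i(m)$. *)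

theory Defs
  imports Main "HOL-Computational_Algebra.Primes"
begin

text \<open>A p-adic integer y is represented by its base-p digit sequence c,
  y = sum_k c k * p^k with 0 <= c k < p. With q = p^b, the digit y_{i,j}
  (1 <= i <= b) is c (i - 1 + b*j), since y = sum_i p^(i-1) sum_j y_{i,j} q^j.\<close>

definition ydig :: "(nat \<Rightarrow> nat) \<Rightarrow> nat \<Rightarrow> nat \<Rightarrow> nat \<Rightarrow> nat" where
  "ydig c b i j = c (i - 1 + b * j)"

text \<open>q-full: no y_i is a non-negative integer, i.e. each y_i has infinitely many nonzero digits.\<close>
definition q_full :: "(nat \<Rightarrow> nat) \<Rightarrow> nat \<Rightarrow> bool" where
  "q_full c b \<longleftrightarrow> (\<forall>i\<in>{1..b}. infinite {j. ydig c b i j \<noteq> 0})"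

definition dfun :: "nat \<Rightarrow> nat \<Rightarrow> (nat \<Rightarrow> nat) \<Rightarrow> nat \<Rightarrow> nat \<Rightarrow> nat" where
  "dfun p b c i n = p ^ (i - 1) * (p ^ b) ^
     (THE w. (\<Sum>j<w. ydig c b i j) < n \<and> n \<le> (\<Sum>j\<le>w. ydig c b i j))"

definition yfun :: "nat \<Rightarrow> nat \<Rightarrow> (nat \<Rightarrow> nat) \<Rightarrow> nat \<Rightarrow> int \<Rightarrow> int" where
  "yfun p b c i m = (\<Sum>n\<in>{1..m}. int (dfun p b c i (nat n)))"

definition yfun2 :: "nat \<Rightarrow> nat \<Rightarrow> (nat \<Rightarrow> nat) \<Rightarrow> nat \<Rightarrow> int \<Rightarrow> int \<Rightarrow> int" where
  "yfun2 p b c i m k = yfun p b c i (m + k) - yfun p b c i m"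

end

theory Submission
  imports Defs
begin

text \<open>Split the positions 1, 2, 3, ... into consecutive blocks of lengths y_{i,0}, y_{i,1}, ...;
  then d_i(n) = p^(i-1) q^w where w is the index of the block containing n. Every block has
  fewer than p positions, so n + p - 1 lies in a strictly later block than n, which gives (1).
  Summing (1) over the k positions after m gives (2). Finally
  y_i(m + p - 1) = y_i(p - 1) + y_i(p - 1, m), where (2) bounds the second term below by
  q y_i(m) and the first is positive since p >= 2.\<close>

lemma sum_int_interval_diff:
  fixes g :: "int \<Rightarrow> 'a::ab_group_add" and m k :: int
  assumes "0 \<le> m" and "0 \<le> k"
  shows "(\<Sum>n\<in>{1..m+k}. g n) - (\<Sum>n\<in>{1..m}. g n) = (\<Sum>t\<in>{1..k}. g (m + t))"
proof -
  have "{1..m+k} = {1..m} \<union> {1+m..k+m}" using assms by auto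
  then have "(\<Sum>n\<in>{1..m+k}. g n) = (\<Sum>n\<in>{1..m}. g n) + (\<Sum>n\<in>{1+m..k+m}. g n)"
    by (simp add: sum.union_disjoint)
  also have "(\<Sum>n\<in>{1+m..k+m}. g n) = (\<Sum>t\<in>{1..k}. g (m + t))"
    by (rule sum.reindex_bij_witness[of _ "\<lambda>t. m + t" "\<lambda>n. n - m"]) auto
  finally show ?thesis by simp
qed

lemma partial_sums_unbounded:
  fixes f :: "nat \<Rightarrow> nat"
  assumes "infinite {j. f j \<noteq> 0}"
  obtains w where "N \<le> (\<Sum>j<w. f j)"
proof -
  obtain A where A: "finite A" "card A = N" "A \<subseteq> {j. f j \<noteq> 0}"
    using infinite_arbitrarily_large[OF assms] by blast
  have "N \<le> (\<Sum>j\<in>A. f j)"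
    using A sum_mono[of A "\<lambda>_. 1" f] by force
  also have "\<dots> \<le> (\<Sum>j<Suc (Max A). f j)"
    using A(1) by (intro sum_mono2) (auto simp: le_imp_less_Suc)
  finally show ?thesis by (rule that)
qed

definition block_index :: "(nat \<Rightarrow> nat) \<Rightarrow> nat \<Rightarrow> nat" where
  "block_index f n = (THE w. (\<Sum>j<w. f j) < n \<and> n \<le> (\<Sum>j\<le>w. f j))"

lemma block_index_bounds:
  fixes f :: "nat \<Rightarrow> nat"
  assumes "infinite {j. f j \<noteq> 0}" and "1 \<le> n"
  shows "(\<Sum>j<block_index f n. f j) < n" and "n \<le> (\<Sum>j\<le>block_index f n. f j)"
proof -
  define P where "P w \<longleftrightarrow> (\<Sum>j<w. f j) < n \<and> n \<le> (\<Sum>j\<le>w. f j)" for w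
  obtain w0 where "n \<le> (\<Sum>j<w0. f j)"
    using partial_sums_unbounded[OF assms(1)] .
  define u where "u = (LEAST u. n \<le> (\<Sum>j<u. f j))"
  have reach: "n \<le> (\<Sum>j<u. f j)"
    unfolding u_def by (rule LeastI) fact
  have "u \<noteq> 0" using reach assms(2) by (cases u) auto
  then have "P (u - 1)"
    using reach not_less_Least[of "u - 1" "\<lambda>u. n \<le> (\<Sum>j<u. f j)"]
    unfolding P_def u_def by (simp add: lessThan_Suc_atMost[symmetric])
  moreover have "w = w'" if "P w" "P w'" for w w'
  proof (rule ccontr)
    have "(\<Sum>j\<le>v. f j) \<le> (\<Sum>j<v'. f j)" if "v < v'" for v v'
      using that by (intro sum_mono2) auto
    moreover assume "w \<noteq> w'"
    ultimately show False
      using \<open>P w\<close> \<open>P w'\<close> unfolding P_def by (meson leD le_less_trans linorder_neqE_nat)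
  qed
  ultimately have "\<exists>!w. P w" by blast
  then have "P (block_index f n)"
    unfolding block_index_def P_def[symmetric] by (rule theI')
  then show "(\<Sum>j<block_index f n. f j) < n" and "n \<le> (\<Sum>j\<le>block_index f n. f j)"
    unfolding P_def by auto
qed

lemma block_index_less_shift:
  fixes f :: "nat \<Rightarrow> nat"
  assumes "infinite {j. f j \<noteq> 0}" and "\<forall>j. f j < p" and "1 \<le> n"
  shows "block_index f n < block_index f (n + p - 1)"
proof (rule ccontr)
  let ?w = "block_index f n" and ?w' = "block_index f (n + p - 1)"
  assume "\<not> ?w < ?w'"
  have "1 \<le> n + p - 1" using assms(3) assms(2)[rule_format, of 0] by linarith
  then have "n + p - 1 \<le> (\<Sum>j\<le>?w'. f j)"
    by (rule block_index_bounds(2)[OF assms(1)])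
  also have "\<dots> \<le> (\<Sum>j\<le>?w. f j)"
    using \<open>\<not> ?w < ?w'\<close> by (intro sum_mono2) auto
  also have "\<dots> = (\<Sum>j<?w. f j) + f ?w"
    by (simp add: lessThan_Suc_atMost[symmetric])
  also have "\<dots> < n + p - 1"
    using block_index_bounds(1)[OF assms(1,3)] assms(2)[rule_format, of ?w] by linarith
  finally show False by simp
qed

lemma dfun_eq_block_index:
  "dfun p b c i n = p ^ (i - 1) * (p ^ b) ^ block_index (ydig c b i) n"
  unfolding dfun_def block_index_def ..

lemma dfun_pos:
  assumes "0 < p"
  shows "0 < dfun p b c i n"
  using assms by (simp add: dfun_eq_block_index)

lemma dfun_shift_ge:
  assumes "\<forall>t. c t < p" and "q_full c b" and "i \<in> {1..b}" and "1 \<le> n"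
  shows "p ^ b * dfun p b c i n \<le> dfun p b c i (n + p - 1)"
proof -
  have "0 < p" using assms(1)[rule_format, of 0] by linarith
  have "block_index (ydig c b i) n < block_index (ydig c b i) (n + p - 1)"
    using assms by (intro block_index_less_shift) (auto simp: q_full_def ydig_def)
  then have "(p ^ b) ^ Suc (block_index (ydig c b i) n)
      \<le> (p ^ b) ^ block_index (ydig c b i) (n + p - 1)"
    using \<open>0 < p\<close> by (intro power_increasing) auto
  then show ?thesis
    by (simp add: dfun_eq_block_index mult.left_commute)
qed

lemma yfun2_eq_sum:
  assumes "0 \<le> m" and "0 \<le> k"
  shows "yfun2 p b c i m k = (\<Sum>t\<in>{1..k}. int (dfun p b c i (nat (m + t))))"
  using assms by (simp add: yfun2_def yfun_def sum_int_interval_diff)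

lemma yfun2_shift_ge:
  assumes "\<forall>t. c t < p" and "q_full c b" and "i \<in> {1..b}" and "0 \<le> m" and "0 \<le> k"
  shows "int (p ^ b) * yfun2 p b c i m k \<le> yfun2 p b c i (m + int p - 1) k"
proof -
  have "0 < p" using assms(1)[rule_format, of 0] by linarith
  have "int (p ^ b) * int (dfun p b c i (nat (m + t)))
      \<le> int (dfun p b c i (nat (m + int p - 1 + t)))"
    if "t \<in> {1..k}" for t
  proof -
    have "nat (m + int p - 1 + t) = nat (m + t) + p - 1"
      using that assms(4) \<open>0 < p\<close> by auto
    moreover have "p ^ b * dfun p b c i (nat (m + t)) \<le> dfun p b c i (nat (m + t) + p - 1)"
      using that assms(4) by (intro dfun_shift_ge[OF assms(1-3)]) auto
    ultimately show ?thesis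
      unfolding of_nat_mult[symmetric] of_nat_le_iff by simp
  qed
  then show ?thesis
    using assms(4,5) \<open>0 < p\<close>
    by (auto simp: yfun2_eq_sum sum_distrib_left intro!: sum_mono)
qed

lemma yfun_shift_gt:
  assumes "\<forall>t. c t < p" and "q_full c b" and "i \<in> {1..b}" and "2 \<le> p" and "0 \<le> m"
  shows "int (p ^ b) * yfun p b c i m < yfun p b c i (m + int p - 1)"
proof -
  have "int (p ^ b) * yfun p b c i m = int (p ^ b) * yfun2 p b c i 0 m"
    by (simp add: yfun2_def yfun_def)
  also have "\<dots> \<le> yfun2 p b c i (int p - 1) m"
    using yfun2_shift_ge[OF assms(1-3), of 0 m] assms(5) by simp
  also have "\<dots> < yfun p b c i (m + int p - 1)"
  proof -
    have "int (dfun p b c i (nat 1)) \<le> yfun p b c i (int p - 1)"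
      unfolding yfun_def by (rule member_le_sum) (use assms(4) in auto)
    then show ?thesis
      using dfun_pos[of p b c i 1] assms(4) by (simp add: yfun2_def algebra_simps)
  qed
  finally show ?thesis .
qed

theorem lemma6p5:
  fixes p b q i n :: nat and c :: "nat \<Rightarrow> nat" and m k :: int
  assumes "prime p" and "b \<ge> 1" and "q = p ^ b"
    and "\<forall>t. c t < p"
    and "q_full c b"
    and "1 \<le> i" and "i \<le> b"
    and "n \<ge> 1" and "m \<ge> 0" and "k \<ge> 0"
  shows "dfun p b c i (n + p - 1) \<ge> q * dfun p b c i n
     \<and> yfun2 p b c i (m + int p - 1) k \<ge> int q * yfun2 p b c i m k
     \<and> yfun p b c i (m + int p - 1) > int q * yfun p b c i m"
proof -
  have "i \<in> {1..b}" using assms(6,7) by simp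
  moreover have "2 \<le> p" using assms(1) by (rule prime_ge_2_nat)
  ultimately show ?thesis
    using dfun_shift_ge yfun2_shift_ge yfun_shift_gt assms(3-5,8-10) by simp
qed

end
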